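(* For Dallal's model, reparameterize by $(\gamma,U,V)$ with $U=(1+\gamma)\lambda_0$ and $V=(1+\gamma)\lambda_1$; this maps $\Omega$ bijectively onto $(0,1)^3$. Jeffreys' prior in the parameterization $(\gamma,U,V)$ is $$\pi_J(\gamma,u,v)\propto \frac{\gamma^{-1/2}(1-\gamma)^{-1/2}}{1+\gamma}\,(u+rv)^{1/2}\,u^{-1/2}(1-u)^{-1/2}\,v^{-1/2}(1-v)^{-1/2},\qquad 0<\gamma,u,v<1,$$ and this prior is proper. Moreover, under $\pi_J$ the parameter $\gamma$ is independent of $(U,V)$ and its marginal prior density is $$\pi_J(\gamma)=\frac{\sqrt2}{\pi}\,\frac{\gamma^{-1/2}(1-\gamma)^{-1/2}}{1+\gamma},\qquad 0<\gamma<1 .$$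
   Context: Dallal's model for bilateral data. There are two groups, $i=1$ (treatment) and $i=0$ (control), with fixed sample sizes $m_{+1},m_{+0}\ge 1$. For each group $i$, the counts $(m_{0i},m_{1i},m_{2i})$, where $m_{hi}$ is the number of subjects in group $i$ with exactly $h$ of two sites cured and $m_{0i}+m_{1i}+m_{2i}=m_{+i}$, follow a trinomial (multinomial) distribution with $m_{+i}$ trials and cell probabilities $p_{0i}=1-(1+\gamma)\lambda_i$, $p_{1i}=2\gamma\lambda_i$, $p_{2i}=(1-\gamma)\lambda_i$. The two groups are independent. The parameter space is $\Omega=\{(\gamma,\lambda_0,\lambda_1):0<\gamma<1,\ 0<\lambda_0,\lambda_1<1/(1+\gamma)\}$. Write $m_{1+}=m_{10}+m_{11}$, $m_{2+}=m_{20}+m_{21}$, $m_{0+}=m_{00}+m_{01}$, and $r=m_{+1}/m_{+0}$. Jeffreys' prior for a given parameterization is the density proportional to the square root of the determinant of the expected Fisher information matrix of this product-trinomial model (with $m_{+0},m_{+1}$ fixed) in that parameterization. *)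

theory Defs
  imports "HOL-Analysis.Analysis"
begin

text \<open>Trinomial probability of counts (a,b,c) (a = #subjects with 0 sites cured,
  b = #with 1 cured, c = #with 2 cured) for n trials and cell probabilities (p0,p1,p2).\<close>
definition trinom_pmf :: "nat \<Rightarrow> real \<times> real \<times> real \<Rightarrow> nat \<times> nat \<times> nat \<Rightarrow> real" where
  "trinom_pmf n p k =
     (case p of (p0, p1, p2) \<Rightarrow> case k of (a, b, c) \<Rightarrow>
        fact n / (fact a * fact b * fact c) * p0 ^ a * p1 ^ b * p2 ^ c)"

definition dallal_cells :: "real \<Rightarrow> real \<Rightarrow> real \<times> real \<times> real" where
  "dallal_cells \<gamma> l = (1 - (1 + \<gamma>) * l, 2 * \<gamma> * l, (1 - \<gamma>) * l)"

text \<open>Sample space: ((m00,m10,m20),(m01,m11,m21)) with row sums m+0 = n0, m+1 = n1.\<close>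
definition dallal_outcomes :: "nat \<Rightarrow> nat \<Rightarrow> ((nat \<times> nat \<times> nat) \<times> (nat \<times> nat \<times> nat)) set" where
  "dallal_outcomes n0 n1 =
     {((a0, b0, c0), (a1, b1, c1)). a0 + b0 + c0 = n0 \<and> a1 + b1 + c1 = n1}"

text \<open>Product-trinomial likelihood, original parameterization (gamma, lambda0, lambda1);
  n0 = m+0 (control), n1 = m+1 (treatment).\<close>
definition dallal_pmf :: "nat \<Rightarrow> nat \<Rightarrow> real \<Rightarrow> real \<Rightarrow> real \<Rightarrow>
    (nat \<times> nat \<times> nat) \<times> (nat \<times> nat \<times> nat) \<Rightarrow> real" where
  "dallal_pmf n0 n1 \<gamma> l0 l1 x =
     trinom_pmf n0 (dallal_cells \<gamma> l0) (fst x) * trinom_pmf n1 (dallal_cells \<gamma> l1) (snd x)"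

definition dallal_Omega :: "(real \<times> real \<times> real) set" where
  "dallal_Omega = {(\<gamma>, l0, l1). 0 < \<gamma> \<and> \<gamma> < 1 \<and> 0 < l0 \<and> l0 < 1 / (1 + \<gamma>)
                     \<and> 0 < l1 \<and> l1 < 1 / (1 + \<gamma>)}"

definition dallal_reparam :: "real \<times> real \<times> real \<Rightarrow> real \<times> real \<times> real" where
  "dallal_reparam = (\<lambda>(\<gamma>, l0, l1). (\<gamma>, (1 + \<gamma>) * l0, (1 + \<gamma>) * l1))"

definition dallal_pmf_guv :: "nat \<Rightarrow> nat \<Rightarrow> real^3 \<Rightarrow>
    (nat \<times> nat \<times> nat) \<times> (nat \<times> nat \<times> nat) \<Rightarrow> real" where
  "dallal_pmf_guv n0 n1 \<theta> x =
     dallal_pmf n0 n1 (\<theta>$1) (\<theta>$2 / (1 + \<theta>$1)) (\<theta>$3 / (1 + \<theta>$1)) x"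

definition score :: "(real^'n \<Rightarrow> 'x \<Rightarrow> real) \<Rightarrow> real^'n \<Rightarrow> 'n \<Rightarrow> 'x \<Rightarrow> real" where
  "score P \<theta> j x = deriv (\<lambda>t. ln (P (\<theta> + t *\<^sub>R axis j 1) x)) 0"

definition fisher_info :: "'x set \<Rightarrow> (real^'n \<Rightarrow> 'x \<Rightarrow> real) \<Rightarrow> real^'n \<Rightarrow> real^'n^'n" where
  "fisher_info X P \<theta> = (\<chi> j k. \<Sum>x\<in>X. P \<theta> x * score P \<theta> j x * score P \<theta> k x)"

definition jeffreys_unnorm :: "'x set \<Rightarrow> (real^'n \<Rightarrow> 'x \<Rightarrow> real) \<Rightarrow> real^'n \<Rightarrow> real" where
  "jeffreys_unnorm X P \<theta> = sqrt (det (fisher_info X P \<theta>))"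

definition dallal_jeffreys :: "nat \<Rightarrow> nat \<Rightarrow> real \<times> real \<times> real \<Rightarrow> real" where
  "dallal_jeffreys n0 n1 = (\<lambda>(g, u, v).
     jeffreys_unnorm (dallal_outcomes n0 n1) (dallal_pmf_guv n0 n1) (vector [g, u, v]))"

end

theory Submission
  imports Defs
begin

text \<open>The score of the product-trinomial likelihood along a coordinate direction of \<open>(\<gamma>, U, V)\<close>
  is a linear combination of the cell counts whose coefficients are the directional derivatives
  of the log cell probabilities; these coefficients have mean zero under one trial, so each
  Fisher entry is \<open>m\<^sub>+\<^sub>0\<close> resp. \<open>m\<^sub>+\<^sub>1\<close> times a one-trial second moment. In \<open>(\<gamma>, U, V)\<close>
  the Fisher matrix turns out to be diagonal, with entries
  \<open>2 (m\<^sub>+\<^sub>0 u + m\<^sub>+\<^sub>1 v) / (\<gamma> (1 - \<gamma>) (1 + \<gamma>)\<^sup>2)\<close>, \<open>m\<^sub>+\<^sub>0 / (u (1 - u))\<close> and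
  \<open>m\<^sub>+\<^sub>1 / (v (1 - v))\<close>, so Jeffreys' density is a product \<open>h(\<gamma>) k(u, v)\<close>.
  The factor \<open>h\<close> integrates to \<open>\<pi> / \<surd>2\<close>, and \<open>k\<close> is dominated by
  \<open>\<surd>(1 + r)\<close> times a product of two arcsine densities, hence integrable. Tonelli's theorem then
  gives properness and, since the density factorizes, independence of \<gamma> and \<open>(U, V)\<close>.\<close>

section \<open>The kernels and their integrals\<close>

definition arcsine_kernel :: "real \<Rightarrow> real" where
  "arcsine_kernel x = x powr (-1/2) * (1 - x) powr (-1/2)"

definition gamma_kernel :: "real \<Rightarrow> real" where
  "gamma_kernel x = arcsine_kernel x / (1 + x)"

definition uv_kernel :: "real \<Rightarrow> real \<times> real \<Rightarrow> real" where
  "uv_kernel r = (\<lambda>(u, v). sqrt (u + r * v) * arcsine_kernel u * arcsine_kernel v)"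

lemma arcsine_kernel_eq: "0 < x \<Longrightarrow> x < 1 \<Longrightarrow> arcsine_kernel x = 1 / (sqrt x * sqrt (1 - x))"
  by (simp add: arcsine_kernel_def powr_minus_divide powr_half_sqrt)

lemma arcsine_kernel_ge_1:
  assumes "0 < x" "x < 1" shows "1 \<le> arcsine_kernel x"
proof -
  have "sqrt x * sqrt (1 - x) \<le> 1 * 1"
    using assms by (intro mult_mono) auto
  then show ?thesis using assms by (simp add: arcsine_kernel_eq field_simps)
qed

lemma arcsine_kernel_nonneg: "x \<in> {0<..<1} \<Longrightarrow> 0 \<le> arcsine_kernel x"
  using arcsine_kernel_ge_1[of x] by simp

lemma gamma_kernel_nonneg: "x \<in> {0<..<1} \<Longrightarrow> 0 \<le> gamma_kernel x"
  using arcsine_kernel_nonneg[of x] by (simp add: gamma_kernel_def)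

lemma continuous_on_arcsine_kernel: "continuous_on {0<..<1} arcsine_kernel"
  unfolding arcsine_kernel_def by (intro continuous_intros) auto

lemma continuous_on_gamma_kernel: "continuous_on {0<..<1} gamma_kernel"
  unfolding gamma_kernel_def arcsine_kernel_def by (intro continuous_intros) auto

lemma has_integral_Ioo_by_antiderivative:
  fixes f F :: "real \<Rightarrow> real"
  assumes "continuous_on {0..1} F" "\<And>x. 0 < x \<Longrightarrow> x < 1 \<Longrightarrow> (F has_real_derivative f x) (at x)"
  shows "(f has_integral (F 1 - F 0)) {0<..<1}"
  using fundamental_theorem_of_calculus_interior[of 0 1 F f] assms
  by (simp add: has_integral_Icc_iff_Ioo has_real_derivative_iff_has_vector_derivative)

lemma arcsine_kernel_has_integral: "(arcsine_kernel has_integral pi) {0<..<1}"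
proof -
  have "((\<lambda>x. arcsin (2*x - 1)) has_real_derivative arcsine_kernel x) (at x)"
    if "0 < x" "x < 1" for x
  proof -
    have "1 - (2*x - 1)\<^sup>2 = 4 * (x * (1 - x))" by (simp add: power2_eq_square algebra_simps)
    then have "sqrt (1 - (2*x - 1)\<^sup>2) = 2 * (sqrt x * sqrt (1 - x))" by (simp add: real_sqrt_mult)
    then show ?thesis using that unfolding arcsine_kernel_def
      by (auto intro!: derivative_eq_intros simp: powr_minus_divide powr_half_sqrt divide_simps)
  qed
  moreover have "continuous_on {0..1} (\<lambda>x::real. arcsin (2*x - 1))"
    by (intro continuous_intros) auto
  ultimately show ?thesis
    using has_integral_Ioo_by_antiderivative[of "\<lambda>x. arcsin (2*x - 1)" arcsine_kernel] by simp
qed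

text \<open>Substituting \<open>\<gamma> = sin\<^sup>2 \<theta>\<close> gives \<open>2 / (1 + sin\<^sup>2 \<theta>)\<close>, whose primitive
  \<open>\<surd>2 arctan (\<surd>2 tan \<theta>)\<close> is rewritten with arccos so that it stays continuous at \<open>\<gamma> = 1\<close>.\<close>
lemma gamma_kernel_has_integral: "(gamma_kernel has_integral (pi / sqrt 2)) {0<..<1}"
proof -
  let ?F = "\<lambda>x::real. sqrt 2 * arccos (sqrt ((1 - x) / (1 + x)))"
  have "(?F has_real_derivative gamma_kernel x) (at x)" if "0 < x" "x < 1" for x
  proof -
    have q: "0 < (1 - x) / (1 + x)" "(1 - x) / (1 + x) < 1" using that by (auto simp: field_simps)
    have "1 - (sqrt ((1 - x) / (1 + x)))\<^sup>2 = 2 * x / (1 + x)" using q(1) that by (simp add: field_simps)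
    then have "sqrt (1 - (sqrt ((1 - x) / (1 + x)))\<^sup>2) = sqrt 2 * sqrt x / sqrt (1 + x)"
      by (simp add: real_sqrt_mult real_sqrt_divide)
    moreover have "sqrt (1 - x) * sqrt (1 - x) = 1 - x" "sqrt (1 + x) * sqrt (1 + x) = 1 + x"
      using that by simp_all
    moreover have "0 < sqrt x" "0 < sqrt (1 - x)" "0 < sqrt (1 + x)" using that by simp_all
    moreover from this have "- sqrt (1 + x) < sqrt (1 - x)" by linarith
    ultimately show ?thesis using q
      unfolding gamma_kernel_def arcsine_kernel_def
      apply (intro derivative_eq_intros refl)
      apply (auto simp: powr_minus_divide powr_half_sqrt real_sqrt_divide)
      apply (simp add: field_simps)
      done
  qed
  moreover have "continuous_on {0..1} ?F"
  proof (intro continuous_intros ballI conjI)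
    fix x :: real assume "x \<in> {0..1}"
    then have "0 \<le> (1 - x) / (1 + x)" "(1 - x) / (1 + x) \<le> 1" by (auto simp: field_simps)
    then show "-1 \<le> sqrt ((1 - x) / (1 + x))" "sqrt ((1 - x) / (1 + x)) \<le> 1"
      by (auto intro: order_trans[OF _ real_sqrt_ge_zero])
  qed auto
  moreover have "?F 1 - ?F 0 = pi / sqrt 2" by (simp add: field_simps)
  ultimately show ?thesis
    using has_integral_Ioo_by_antiderivative[of ?F gamma_kernel] by simp
qed

lemma has_integral_Times_nonneg:
  fixes f :: "'a::euclidean_space \<Rightarrow> real" and g :: "'b::euclidean_space \<Rightarrow> real"
  assumes "open S" "open T" "continuous_on S f" "continuous_on T g"
    and f0: "\<And>x. x \<in> S \<Longrightarrow> 0 \<le> f x" and g0: "\<And>y. y \<in> T \<Longrightarrow> 0 \<le> g y"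
    and fI: "(f has_integral I) S" and gK: "(g has_integral K) T"
  shows "((\<lambda>(x, y). f x * g y) has_integral (I * K)) (S \<times> T)"
proof -
  define F where "F = (\<lambda>x. indicator S x * f x)"
  define G where "G = (\<lambda>y. indicator T y * g y)"
  have [measurable]: "F \<in> borel_measurable borel" "G \<in> borel_measurable borel"
    using borel_measurable_continuous_on_indicator[OF _ assms(3)]
      borel_measurable_continuous_on_indicator[OF _ assms(4)] assms(1,2)
    by (simp_all add: F_def G_def)
  have F0: "0 \<le> F x" and G0: "0 \<le> G y" for x y
    using f0 g0 by (simp_all add: F_def G_def indicator_def)
  have I0: "0 \<le> I" and K0: "0 \<le> K"
    using has_integral_nonneg[OF fI] has_integral_nonneg[OF gK] f0 g0 by auto
  have nF: "(\<integral>\<^sup>+ x. ennreal (F x) \<partial>lborel) = ennreal I"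
    unfolding F_def by (rule nn_integral_has_integral_lebesgue[OF f0 fI])
  have nG: "(\<integral>\<^sup>+ y. ennreal (G y) \<partial>lborel) = ennreal K"
    unfolding G_def by (rule nn_integral_has_integral_lebesgue[OF g0 gK])
  define H where "H z = F (fst z) * G (snd z)" for z :: "'a \<times> 'b"
  have Hm: "H \<in> borel_measurable borel"
    unfolding H_def borel_prod[symmetric] by measurable
  have "(\<integral>\<^sup>+ z. ennreal (H z) \<partial>lborel) = (\<integral>\<^sup>+ z. ennreal (H z) \<partial>(lborel \<Otimes>\<^sub>M lborel))"
    by (simp add: lborel_prod)
  also have "\<dots> = (\<integral>\<^sup>+ x. \<integral>\<^sup>+ y. ennreal (H (x, y)) \<partial>lborel \<partial>lborel)"
    by (rule lborel.nn_integral_fst[symmetric]) (use Hm in \<open>simp add: lborel_prod\<close>)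
  also have "\<dots> = ennreal (I * K)"
    by (simp add: H_def ennreal_mult F0 G0 I0 K0 nn_integral_cmult nn_integral_multc nF nG)
  finally have "(H has_integral (I * K)) UNIV"
    by (intro nn_integral_has_integral Hm) (auto simp: H_def F0 G0 I0 K0)
  moreover have "H = (\<lambda>z. if z \<in> S \<times> T then (\<lambda>(x, y). f x * g y) z else 0)"
    by (auto simp: H_def F_def G_def indicator_def fun_eq_iff)
  ultimately show ?thesis by (simp add: has_integral_restrict_UNIV)
qed

lemma product_density_marginals:
  fixes f :: "'a::euclidean_space \<Rightarrow> real" and g :: "'b::euclidean_space \<Rightarrow> real"
    and J :: "'a \<times> 'b \<Rightarrow> real"
  assumes "open S" "open T" "continuous_on S f" "continuous_on T g"
    and "\<And>x. x \<in> S \<Longrightarrow> 0 \<le> f x" "\<And>y. y \<in> T \<Longrightarrow> 0 \<le> g y"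
    and fI: "(f has_integral I) S" and gK: "(g has_integral K) T" and "I \<noteq> 0" "K \<noteq> 0"
    and J: "\<And>x y. x \<in> S \<Longrightarrow> y \<in> T \<Longrightarrow> J (x, y) = f x * g y"
  shows "(J has_integral I * K) (S \<times> T)"
    and "x \<in> S \<Longrightarrow> integral T (\<lambda>y. J (x, y) / (I * K)) = f x / I"
    and "x \<in> S \<Longrightarrow> y \<in> T \<Longrightarrow> J (x, y) / (I * K) = f x / I * integral S (\<lambda>x'. J (x', y) / (I * K))"
proof -
  show "(J has_integral I * K) (S \<times> T)"
    using has_integral_Times_nonneg[OF assms(1-8)] by (rule has_integral_eq[rotated]) (auto simp: J)
  show "integral T (\<lambda>y. J (x, y) / (I * K)) = f x / I" if "x \<in> S"
  proof -
    have "integral T (\<lambda>y. J (x, y) / (I * K)) = integral T (\<lambda>y. f x / (I * K) * g y)"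
      using that by (intro integral_cong) (simp add: J)
    then show ?thesis using gK \<open>K \<noteq> 0\<close> by (simp add: integral_unique)
  qed
  show "J (x, y) / (I * K) = f x / I * integral S (\<lambda>x'. J (x', y) / (I * K))"
    if "x \<in> S" "y \<in> T"
  proof -
    have "integral S (\<lambda>x'. J (x', y) / (I * K)) = integral S (\<lambda>x'. g y / (I * K) * f x')"
      using that by (intro integral_cong) (simp add: J)
    then show ?thesis using fI that \<open>I \<noteq> 0\<close> by (simp add: integral_unique J)
  qed
qed

lemma uv_kernel_bounds:
  assumes "0 \<le> r" "0 < u" "u < 1" "0 < v" "v < 1"
  shows "1 \<le> uv_kernel r (u, v)"
    and "uv_kernel r (u, v) \<le> sqrt (1 + r) * arcsine_kernel u * arcsine_kernel v"
proof -
  have "sqrt u * sqrt (1 - u) \<le> sqrt u * 1"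
    using assms by (intro mult_left_mono) auto
  also have "\<dots> \<le> sqrt (u + r * v)"
    using assms by simp
  finally have "1 \<le> sqrt (u + r * v) * arcsine_kernel u"
    using assms by (simp add: arcsine_kernel_eq field_simps)
  then show "1 \<le> uv_kernel r (u, v)"
    using mult_mono[OF _ arcsine_kernel_ge_1[of v], of 1] assms by (simp add: uv_kernel_def)
  have "r * v \<le> r" using assms by (simp add: mult_left_le)
  then have "sqrt (u + r * v) \<le> sqrt (1 + r)" using assms by simp
  then show "uv_kernel r (u, v) \<le> sqrt (1 + r) * arcsine_kernel u * arcsine_kernel v"
    using arcsine_kernel_ge_1[of u] arcsine_kernel_ge_1[of v] assms
    by (simp add: uv_kernel_def mult_right_mono)
qed

lemma open_unit_square: "open ({0<..<1::real} \<times> {0<..<1::real})"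
  by (intro open_Times) auto

lemma continuous_on_uv_kernel:
  "0 \<le> r \<Longrightarrow> continuous_on ({0<..<1} \<times> {0<..<1}) (uv_kernel r)"
  unfolding uv_kernel_def arcsine_kernel_def case_prod_unfold
  by (intro continuous_intros) (auto simp: add_pos_nonneg)

lemma uv_kernel_integrable:
  assumes "0 \<le> r"
  shows "uv_kernel r integrable_on ({0<..<1} \<times> {0<..<1})"
proof -
  let ?B = "{0<..<1::real} \<times> {0<..<1::real}"
  let ?G = "\<lambda>(u, v). (sqrt (1 + r) * arcsine_kernel u) * arcsine_kernel v"
  have B: "?B \<in> sets lebesgue"
    using lmeasurable_open[OF bounded_Times open_unit_square] by auto
  have "(?G has_integral (sqrt (1 + r) * pi * pi)) ?B"
    by (rule has_integral_Times_nonneg[OF open_greaterThanLessThan open_greaterThanLessThan _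
          continuous_on_arcsine_kernel _ arcsine_kernel_nonneg
          has_integral_mult_right[OF arcsine_kernel_has_integral] arcsine_kernel_has_integral])
      (use arcsine_kernel_nonneg assms in \<open>auto intro!: continuous_intros continuous_on_arcsine_kernel\<close>)
  moreover have "uv_kernel r \<in> borel_measurable (lebesgue_on ?B)"
    by (rule continuous_imp_measurable_on_sets_lebesgue[OF continuous_on_uv_kernel[OF assms] B])
  moreover have "\<bar>uv_kernel r y\<bar> \<le> ?G y" if "y \<in> ?B" for y
    using that uv_kernel_bounds[OF assms] by force
  ultimately show ?thesis
    using measurable_bounded_by_integrable_imp_integrable_real[OF _ _ _ B] by blast
qed

lemma uv_kernel_integral_ge_1:
  assumes "0 \<le> r"
  shows "1 \<le> integral ({0<..<1} \<times> {0<..<1}) (uv_kernel r)"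
proof -
  let ?B = "{0<..<1::real} \<times> {0<..<1::real}"
  have "((\<lambda>x::real. 1::real) has_integral 1) {0<..<1}"
    using has_integral_const_real[of "1::real" 0 1] by (simp add: has_integral_Icc_iff_Ioo)
  then have "((\<lambda>(u, v). (1::real) * 1) has_integral 1 * 1) ?B"
    by (intro has_integral_Times_nonneg) auto
  then have one: "((\<lambda>_. 1::real) has_integral 1) ?B"
    by (simp add: case_prod_unfold)
  have "integral ?B (\<lambda>_. 1::real) \<le> integral ?B (uv_kernel r)"
    using uv_kernel_integrable[OF assms] uv_kernel_bounds(1)[OF assms] one
    by (intro integral_le) auto
  then show ?thesis using one by (simp add: integral_unique)
qed

section \<open>Moments of the trinomial distribution\<close>

definition trinom_outcomes :: "nat \<Rightarrow> (nat \<times> nat \<times> nat) set" where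
  "trinom_outcomes n = {(a, b, c). a + b + c = n}"

lemma finite_trinom_outcomes: "finite (trinom_outcomes n)"
proof -
  have "trinom_outcomes n \<subseteq> {0..n} \<times> {0..n} \<times> {0..n}" by (auto simp: trinom_outcomes_def)
  then show ?thesis by (rule finite_subset) auto
qed

lemma trinom_outcomes_0: "trinom_outcomes 0 = {(0, 0, 0)}"
  by (auto simp: trinom_outcomes_def)

lemma sum_trinom_outcomes_Suc_reindex:
  assumes "inj_on h (trinom_outcomes n)"
    and "h ` trinom_outcomes n = {y \<in> trinom_outcomes (Suc n). k y \<noteq> 0}"
  shows "(\<Sum>y\<in>trinom_outcomes (Suc n). real (k y) * F y)
       = (\<Sum>x\<in>trinom_outcomes n. real (k (h x)) * F (h x))"
proof -
  have "(\<Sum>y\<in>trinom_outcomes (Suc n). real (k y) * F y) = (\<Sum>y\<in>h ` trinom_outcomes n. real (k y) * F y)"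
    unfolding assms(2) by (rule sum.mono_neutral_right) (auto simp: finite_trinom_outcomes)
  also have "\<dots> = (\<Sum>x\<in>trinom_outcomes n. real (k (h x)) * F (h x))"
    using sum.reindex[OF assms(1)] by simp
  finally show ?thesis .
qed

lemma trinom_pmf_Suc:
  assumes "a + b + c = n"
  shows "real (Suc a) * trinom_pmf (Suc n) (p0, p1, p2) (Suc a, b, c)
           = real (Suc n) * (p0 * trinom_pmf n (p0, p1, p2) (a, b, c))"
    and "real (Suc b) * trinom_pmf (Suc n) (p0, p1, p2) (a, Suc b, c)
           = real (Suc n) * (p1 * trinom_pmf n (p0, p1, p2) (a, b, c))"
    and "real (Suc c) * trinom_pmf (Suc n) (p0, p1, p2) (a, b, Suc c)
           = real (Suc n) * (p2 * trinom_pmf n (p0, p1, p2) (a, b, c))"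
  using assms by (simp_all add: trinom_pmf_def field_simps del: of_nat_Suc)

text \<open>Conditioning on the last of \<open>n + 1\<close> trials.\<close>
lemma sum_trinom_pmf_Suc:
  fixes f :: "nat \<times> nat \<times> nat \<Rightarrow> real"
  shows "(\<Sum>y\<in>trinom_outcomes (Suc n). trinom_pmf (Suc n) (p0, p1, p2) y * f y)
     = (\<Sum>(a, b, c)\<in>trinom_outcomes n. trinom_pmf n (p0, p1, p2) (a, b, c)
          * (p0 * f (Suc a, b, c) + p1 * f (a, Suc b, c) + p2 * f (a, b, Suc c)))"
proof -
  let ?T = trinom_outcomes and ?P = "trinom_pmf (Suc n) (p0, p1, p2)"
  define F where "F y = ?P y * f y / real (Suc n)" for y
  have "(\<Sum>y\<in>?T (Suc n). ?P y * f y)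
      = (\<Sum>y\<in>?T (Suc n). real (fst y) * F y + real (fst (snd y)) * F y + real (snd (snd y)) * F y)"
  proof (intro sum.cong refl)
    fix y assume "y \<in> ?T (Suc n)"
    then have "real (fst y) + real (fst (snd y)) + real (snd (snd y)) = real (Suc n)"
      unfolding trinom_outcomes_def of_nat_add[symmetric] by auto
    then show "?P y * f y = real (fst y) * F y + real (fst (snd y)) * F y + real (snd (snd y)) * F y"
      unfolding F_def distrib_right[symmetric] by (simp del: of_nat_Suc)
  qed
  also have "\<dots> = (\<Sum>(a, b, c)\<in>?T n. real (Suc a) * F (Suc a, b, c))
      + (\<Sum>(a, b, c)\<in>?T n. real (Suc b) * F (a, Suc b, c))
      + (\<Sum>(a, b, c)\<in>?T n. real (Suc c) * F (a, b, Suc c))"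
  proof -
    have "inj_on (\<lambda>(a, b, c). (Suc a, b, c)) (?T n)" "inj_on (\<lambda>(a, b, c). (a, Suc b, c)) (?T n)"
      "inj_on (\<lambda>(a, b, c). (a, b, Suc c)) (?T n)"
      by (auto simp: inj_on_def)
    moreover have "(\<lambda>(a, b, c). (Suc a, b, c)) ` ?T n = {y \<in> ?T (Suc n). fst y \<noteq> 0}"
      "(\<lambda>(a, b, c). (a, Suc b, c)) ` ?T n = {y \<in> ?T (Suc n). fst (snd y) \<noteq> 0}"
      "(\<lambda>(a, b, c). (a, b, Suc c)) ` ?T n = {y \<in> ?T (Suc n). snd (snd y) \<noteq> 0}"
      by (auto simp: trinom_outcomes_def image_iff; presburger)+
    ultimately show ?thesis
      unfolding sum.distrib by (subst (1 2 3) sum_trinom_outcomes_Suc_reindex) (auto simp: case_prod_unfold)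
  qed
  also have "\<dots> = (\<Sum>(a, b, c)\<in>?T n. trinom_pmf n (p0, p1, p2) (a, b, c)
          * (p0 * f (Suc a, b, c) + p1 * f (a, Suc b, c) + p2 * f (a, b, Suc c)))"
    unfolding sum.distrib[symmetric]
  proof (intro sum.cong refl, clarify)
    fix a b c assume "(a, b, c) \<in> ?T n"
    then have n: "a + b + c = n" by (simp add: trinom_outcomes_def)
    have "real (Suc n) \<noteq> 0" by (simp del: of_nat_Suc)
    then show "real (Suc a) * F (Suc a, b, c) + real (Suc b) * F (a, Suc b, c) + real (Suc c) * F (a, b, Suc c)
        = trinom_pmf n (p0, p1, p2) (a, b, c)
          * (p0 * f (Suc a, b, c) + p1 * f (a, Suc b, c) + p2 * f (a, b, Suc c))"
      unfolding F_def times_divide_eq_right mult.assoc[symmetric] trinom_pmf_Suc[OF n]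
      by (simp add: field_simps del: of_nat_Suc)
  qed
  finally show ?thesis .
qed

definition count_comb :: "real \<times> real \<times> real \<Rightarrow> nat \<times> nat \<times> nat \<Rightarrow> real" where
  "count_comb = (\<lambda>(A, B, C) (a, b, c). A * real a + B * real b + C * real c)"

definition trial_mean :: "real \<times> real \<times> real \<Rightarrow> real \<times> real \<times> real \<Rightarrow> real" where
  "trial_mean = (\<lambda>(A, B, C) (p0, p1, p2). A * p0 + B * p1 + C * p2)"

definition trial_moment2 ::
    "real \<times> real \<times> real \<Rightarrow> real \<times> real \<times> real \<Rightarrow> real \<times> real \<times> real \<Rightarrow> real" where
  "trial_moment2 = (\<lambda>(A, B, C) (A', B', C') (p0, p1, p2). A * A' * p0 + B * B' * p1 + C * C' * p2)"

lemma count_comb_Suc: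
  "count_comb l (Suc a, b, c) = count_comb l (a, b, c) + fst l"
  "count_comb l (a, Suc b, c) = count_comb l (a, b, c) + fst (snd l)"
  "count_comb l (a, b, Suc c) = count_comb l (a, b, c) + snd (snd l)"
  by (cases l; simp add: count_comb_def algebra_simps)+

lemma sum_trinom_pmf:
  assumes "p0 + p1 + p2 = 1"
  shows "(\<Sum>x\<in>trinom_outcomes n. trinom_pmf n (p0, p1, p2) x) = 1"
proof (induction n)
  case 0 then show ?case by (simp add: trinom_outcomes_0 trinom_pmf_def)
next
  case (Suc n)
  have "(\<Sum>x\<in>trinom_outcomes (Suc n). trinom_pmf (Suc n) (p0, p1, p2) x * 1)
      = (\<Sum>x\<in>trinom_outcomes n. trinom_pmf n (p0, p1, p2) x)"
    unfolding sum_trinom_pmf_Suc assms[unfolded add.assoc] by (simp add: case_prod_unfold assms)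
  then show ?case using Suc by simp
qed

lemma trinom_mean_count_comb:
  assumes "p0 + p1 + p2 = 1"
  shows "(\<Sum>x\<in>trinom_outcomes n. trinom_pmf n (p0, p1, p2) x * count_comb l x)
       = real n * trial_mean l (p0, p1, p2)"
proof (induction n)
  case 0 then show ?case by (simp add: trinom_outcomes_0 trinom_pmf_def count_comb_def case_prod_unfold)
next
  case (Suc n)
  let ?P = "trinom_pmf n (p0, p1, p2)" and ?m = "trial_mean l (p0, p1, p2)"
  have p2: "p2 = 1 - p0 - p1" using assms by simp
  have "(\<Sum>x\<in>trinom_outcomes (Suc n). trinom_pmf (Suc n) (p0, p1, p2) x * count_comb l x)
      = (\<Sum>x\<in>trinom_outcomes n. ?P x * count_comb l x + ?m * ?P x)"
    unfolding sum_trinom_pmf_Suc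
    by (intro sum.cong refl) (auto simp: count_comb_Suc trial_mean_def algebra_simps p2
        split: prod.splits)
  also have "\<dots> = real (Suc n) * ?m"
    by (simp only: sum.distrib sum_distrib_left[symmetric] Suc.IH sum_trinom_pmf[OF assms])
      (simp add: algebra_simps)
  finally show ?case .
qed

lemma trinom_centered_moment2:
  assumes "p0 + p1 + p2 = 1"
    and "trial_mean l (p0, p1, p2) = 0" "trial_mean l' (p0, p1, p2) = 0"
  shows "(\<Sum>x\<in>trinom_outcomes n. trinom_pmf n (p0, p1, p2) x * (count_comb l x * count_comb l' x))
       = real n * trial_moment2 l l' (p0, p1, p2)"
proof (induction n)
  case 0 then show ?case by (simp add: trinom_outcomes_0 trinom_pmf_def count_comb_def case_prod_unfold)
next
  case (Suc n)
  let ?P = "trinom_pmf n (p0, p1, p2)" and ?q = "trial_moment2 l l' (p0, p1, p2)"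
  have step: "p0 * ((L + fst l) * (L' + fst l')) + p1 * ((L + fst (snd l)) * (L' + fst (snd l')))
        + p2 * ((L + snd (snd l)) * (L' + snd (snd l')))
      = (p0 + p1 + p2) * (L * L') + L * trial_mean l' (p0, p1, p2) + L' * trial_mean l (p0, p1, p2) + ?q"
    for L L'
    by (cases l, cases l') (simp add: trial_mean_def trial_moment2_def algebra_simps)
  have "(\<Sum>x\<in>trinom_outcomes (Suc n). trinom_pmf (Suc n) (p0, p1, p2) x * (count_comb l x * count_comb l' x))
      = (\<Sum>x\<in>trinom_outcomes n. ?P x * (count_comb l x * count_comb l' x) + ?q * ?P x)"
    unfolding sum_trinom_pmf_Suc
    by (intro sum.cong refl) (auto simp: count_comb_Suc step assms; simp add: algebra_simps)
  also have "\<dots> = real (Suc n) * ?q"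
    by (simp only: sum.distrib sum_distrib_left[symmetric] Suc.IH sum_trinom_pmf[OF assms(1)])
      (simp add: algebra_simps)
  finally show ?case .
qed

lemma two_trinom_centered_moment2:
  assumes p: "p0 + p1 + p2 = 1" and q: "q0 + q1 + q2 = 1"
    and m: "trial_mean l0 (p0, p1, p2) = 0" "trial_mean l0' (p0, p1, p2) = 0"
      "trial_mean l1 (q0, q1, q2) = 0" "trial_mean l1' (q0, q1, q2) = 0"
  shows "(\<Sum>x\<in>trinom_outcomes n0 \<times> trinom_outcomes n1.
        trinom_pmf n0 (p0, p1, p2) (fst x) * trinom_pmf n1 (q0, q1, q2) (snd x)
        * (count_comb l0 (fst x) + count_comb l1 (snd x)) * (count_comb l0' (fst x) + count_comb l1' (snd x)))
     = real n0 * trial_moment2 l0 l0' (p0, p1, p2) + real n1 * trial_moment2 l1 l1' (q0, q1, q2)"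
proof -
  let ?P = "trinom_pmf n0 (p0, p1, p2)" and ?Q = "trinom_pmf n1 (q0, q1, q2)"
  let ?L = "count_comb l0" and ?L' = "count_comb l0'" and ?M = "count_comb l1" and ?M' = "count_comb l1'"
  have inner: "(\<Sum>y\<in>trinom_outcomes n1. ?P x * ?Q y * (?L x + ?M y) * (?L' x + ?M' y))
      = ?P x * (?L x * ?L' x) + real n1 * trial_moment2 l1 l1' (q0, q1, q2) * ?P x" for x
  proof -
    have "(\<Sum>y\<in>trinom_outcomes n1. ?P x * ?Q y * (?L x + ?M y) * (?L' x + ?M' y))
       = (\<Sum>y\<in>trinom_outcomes n1. ?P x * (?L x * ?L' x) * ?Q y + ?P x * ?L x * (?Q y * ?M' y)
            + ?P x * ?L' x * (?Q y * ?M y) + ?P x * (?Q y * (?M y * ?M' y)))"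
      by (intro sum.cong refl) (simp add: algebra_simps)
    then show ?thesis
      by (simp only: sum.distrib sum_distrib_left[symmetric] sum_trinom_pmf[OF q]
          trinom_mean_count_comb[OF q] trinom_centered_moment2[OF q m(3,4)] m) (simp add: algebra_simps)
  qed
  have "(\<Sum>x\<in>trinom_outcomes n0 \<times> trinom_outcomes n1. ?P (fst x) * ?Q (snd x)
        * (?L (fst x) + ?M (snd x)) * (?L' (fst x) + ?M' (snd x)))
     = (\<Sum>x\<in>trinom_outcomes n0. \<Sum>y\<in>trinom_outcomes n1. ?P x * ?Q y * (?L x + ?M y) * (?L' x + ?M' y))"
    by (simp add: sum.cartesian_product case_prod_unfold)
  also have "\<dots> = (\<Sum>x\<in>trinom_outcomes n0. ?P x * (?L x * ?L' x) + real n1 * trial_moment2 l1 l1' (q0, q1, q2) * ?P x)"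
    by (simp only: inner)
  also have "\<dots> = real n0 * trial_moment2 l0 l0' (p0, p1, p2) + real n1 * trial_moment2 l1 l1' (q0, q1, q2)"
    by (simp only: sum.distrib sum_distrib_left[symmetric] sum_trinom_pmf[OF p]
        trinom_centered_moment2[OF p m(1,2)])
  finally show ?thesis .
qed

section \<open>Fisher information of Dallal's model\<close>

lemma has_real_derivative_trinom_pmf:
  fixes q0 q1 q2 :: "real \<Rightarrow> real"
  assumes "(q0 has_real_derivative d0) (at t)" "(q1 has_real_derivative d1) (at t)"
      "(q2 has_real_derivative d2) (at t)"
    and pos: "q0 t > 0" "q1 t > 0" "q2 t > 0"
  shows "((\<lambda>s. trinom_pmf n (q0 s, q1 s, q2 s) (a, b, c)) has_real_derivative
     trinom_pmf n (q0 t, q1 t, q2 t) (a, b, c) * (real a * d0 / q0 t + real b * d1 / q1 t + real c * d2 / q2 t))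
     (at t)"
proof -
  define K :: real where "K = fact n / (fact a * fact b * fact c)"
  have "((\<lambda>s. K * q0 s ^ a * q1 s ^ b * q2 s ^ c) has_real_derivative
     K * (real a * q0 t ^ (a - 1) * d0) * q1 t ^ b * q2 t ^ c
      + K * q0 t ^ a * (real b * q1 t ^ (b - 1) * d1) * q2 t ^ c
      + K * q0 t ^ a * q1 t ^ b * (real c * q2 t ^ (c - 1) * d2)) (at t)"
    by (auto intro!: derivative_eq_intros assms(1-3) simp: algebra_simps)
  moreover have "K * (real a * q0 t ^ (a - 1) * d0) * q1 t ^ b * q2 t ^ c
      + K * q0 t ^ a * (real b * q1 t ^ (b - 1) * d1) * q2 t ^ c
      + K * q0 t ^ a * q1 t ^ b * (real c * q2 t ^ (c - 1) * d2)
    = trinom_pmf n (q0 t, q1 t, q2 t) (a, b, c) * (real a * d0 / q0 t + real b * d1 / q1 t + real c * d2 / q2 t)"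
  proof -
    have e: "real a * q0 t ^ (a - 1) = real a * q0 t ^ a / q0 t" "real b * q1 t ^ (b - 1) = real b * q1 t ^ b / q1 t"
      "real c * q2 t ^ (c - 1) = real c * q2 t ^ c / q2 t"
      using pos by (cases a; cases b; cases c; simp)+
    show ?thesis
      unfolding trinom_pmf_def prod.case K_def[symmetric] e using pos by (simp add: field_simps)
  qed
  ultimately show ?thesis by (simp add: trinom_pmf_def K_def)
qed

text \<open>The derivatives of \<open>ln p\<^sub>0, ln p\<^sub>1, ln p\<^sub>2\<close> along the direction \<open>(e, f)\<close> of the
  \<open>(\<gamma>, U)\<close>-plane, where \<open>(p\<^sub>0, p\<^sub>1, p\<^sub>2) = dallal_cells \<gamma> (U / (1 + \<gamma>))\<close>.\<close>
definition dallal_score_coeffs :: "real \<Rightarrow> real \<Rightarrow> real \<Rightarrow> real \<Rightarrow> real \<times> real \<times> real" where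
  "dallal_score_coeffs g u e f = (- f / (1 - u), e / g + f / u - e / (1 + g), - e / (1 - g) + f / u - e / (1 + g))"

lemma dallal_cells_reparam_pos:
  fixes g u :: real
  assumes "0 < g" "g < 1" "0 < u" "u < 1"
  shows "0 < 1 - (1 + g) * (u / (1 + g))" "0 < 2 * g * (u / (1 + g))" "0 < (1 - g) * (u / (1 + g))"
proof -
  have "u * (1 + g) < 1 * (1 + g)" using assms by (intro mult_strict_right_mono) auto
  then show "0 < 1 - (1 + g) * (u / (1 + g))" "0 < 2 * g * (u / (1 + g))" "0 < (1 - g) * (u / (1 + g))"
    using assms by (simp_all add: field_simps)
qed

lemma has_real_derivative_trinom_pmf_dallal:
  assumes "0 < g" "g < 1" "0 < u" "u < 1"
  shows "((\<lambda>t. trinom_pmf n (dallal_cells (g + t * e) ((u + t * f) / (1 + (g + t * e)))) x)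
      has_real_derivative
      trinom_pmf n (dallal_cells g (u / (1 + g))) x * count_comb (dallal_score_coeffs g u e f) x) (at 0)"
proof -
  obtain a b c where x: "x = (a, b, c)" by (cases x)
  let ?l = "\<lambda>t. (u + t * f) / (1 + (g + t * e))"
  let ?q0 = "\<lambda>t. 1 - (1 + (g + t * e)) * ?l t" and ?q1 = "\<lambda>t. 2 * (g + t * e) * ?l t"
    and ?q2 = "\<lambda>t. (1 - (g + t * e)) * ?l t"
  define s where "s = 1 + g"
  have g: "g = s - 1" and "s \<noteq> 0" "s - 1 \<noteq> 0" "2 - s \<noteq> 0" using assms by (auto simp: s_def)
  then have d: "(?q0 has_real_derivative - f) (at 0)"
    "(?q1 has_real_derivative ?q1 0 * (e / g + f / u - e / (1 + g))) (at 0)"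
    "(?q2 has_real_derivative ?q2 0 * (- e / (1 - g) + f / u - e / (1 + g))) (at 0)"
    using assms unfolding g by (auto intro!: derivative_eq_intros simp: field_simps)
  have p: "0 < ?q0 0" "0 < ?q1 0" "0 < ?q2 0"
    using dallal_cells_reparam_pos[OF assms] by simp_all
  show ?thesis
    unfolding x dallal_cells_def
    by (rule DERIV_cong[OF has_real_derivative_trinom_pmf[OF d p]])
      (use assms p in \<open>simp add: dallal_score_coeffs_def count_comb_def\<close>)
qed

lemma trinom_pmf_dallal_pos:
  assumes "0 < g" "g < 1" "0 < u" "u < 1"
  shows "0 < trinom_pmf n (dallal_cells g (u / (1 + g))) x"
  using dallal_cells_reparam_pos[OF assms] by (cases x) (simp add: dallal_cells_def trinom_pmf_def)

lemma score_dallal_pmf_guv: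
  fixes g u v :: real and j :: 3
  assumes g: "0 < g" "g < 1" and u: "0 < u" "u < 1" and v: "0 < v" "v < 1"
  shows "score (dallal_pmf_guv n0 n1) (vector [g, u, v]) j x
       = count_comb (dallal_score_coeffs g u (axis j 1 $ 1) (axis j 1 $ 2)) (fst x)
       + count_comb (dallal_score_coeffs g v (axis j 1 $ 1) (axis j 1 $ 3)) (snd x)"
proof -
  let ?e = "\<lambda>i. axis j (1::real) $ i"
  let ?P0 = "\<lambda>t. trinom_pmf n0 (dallal_cells (g + t * ?e 1) ((u + t * ?e 2) / (1 + (g + t * ?e 1)))) (fst x)"
  let ?P1 = "\<lambda>t. trinom_pmf n1 (dallal_cells (g + t * ?e 1) ((v + t * ?e 3) / (1 + (g + t * ?e 1)))) (snd x)"
  have "(\<lambda>t. ln (dallal_pmf_guv n0 n1 (vector [g, u, v] + t *\<^sub>R axis j 1) x)) = (\<lambda>t. ln (?P0 t * ?P1 t))"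
    by (simp add: dallal_pmf_guv_def dallal_pmf_def)
  moreover have "((\<lambda>t. ln (?P0 t * ?P1 t)) has_real_derivative
      count_comb (dallal_score_coeffs g u (?e 1) (?e 2)) (fst x)
      + count_comb (dallal_score_coeffs g v (?e 1) (?e 3)) (snd x)) (at 0)"
    using trinom_pmf_dallal_pos[OF g u, of n0 "fst x"] trinom_pmf_dallal_pos[OF g v, of n1 "snd x"]
    by (auto intro!: derivative_eq_intros has_real_derivative_trinom_pmf_dallal g u v
        simp: field_simps)
  ultimately show ?thesis
    unfolding score_def by (simp add: DERIV_imp_deriv)
qed

lemma dallal_score_coeffs_mean:
  assumes "0 < g" "g < 1" "0 < u" "u < 1"
  shows "trial_mean (dallal_score_coeffs g u e f) (dallal_cells g (u / (1 + g))) = 0"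
proof -
  define s m k where "s = 1 + g" and "m = 1 - g" and "k = 1 - u"
  have "s \<noteq> 0" "m \<noteq> 0" "g \<noteq> 0" "k \<noteq> 0" "u \<noteq> 0" using assms by (auto simp: s_def m_def k_def)
  then have "- f / k * (1 - s * (u / s)) + (e / g + f / u - e / s) * (2 * g * (u / s))
      + (- e / m + f / u - e / s) * (m * (u / s)) = 0"
    by (simp add: field_simps) (simp add: s_def m_def k_def algebra_simps)
  then show ?thesis
    by (simp add: trial_mean_def dallal_score_coeffs_def dallal_cells_def s_def m_def k_def)
qed

lemma dallal_score_coeffs_moment2:
  assumes "0 < g" "g < 1" "0 < u" "u < 1"
  shows "trial_moment2 (dallal_score_coeffs g u e f) (dallal_score_coeffs g u e' f') (dallal_cells g (u / (1 + g)))
       = e * e' * (2 * u / (g * (1 - g) * (1 + g)\<^sup>2)) + f * f' / (u * (1 - u))"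
proof -
  define s m k where "s = 1 + g" and "m = 1 - g" and "k = 1 - u"
  have nz: "s \<noteq> 0" "m \<noteq> 0" "g \<noteq> 0" "k \<noteq> 0" "u \<noteq> 0" using assms by (auto simp: s_def m_def k_def)
  define a1 a2 b0 b1 c0 c1 c2 where "a1 = 1 / (g * s)" and "a2 = - 2 / (m * s)" and "b0 = - 1 / k"
    and "b1 = 1 / u" and "c0 = k" and "c1 = 2 * g * (u / s)" and "c2 = m * (u / s)"
  have coeffs: "dallal_score_coeffs g u e f = (f * b0, e * a1 + f * b1, e * a2 + f * b1)" for e f
  proof -
    have "e / g + f / u - e / s = e * a1 + f * b1" "- e / m + f / u - e / s = e * a2 + f * b1"
      using nz by (simp_all add: a1_def a2_def b1_def field_simps) (simp_all add: s_def m_def algebra_simps)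
    then show ?thesis
      unfolding dallal_score_coeffs_def s_def[symmetric] m_def[symmetric] k_def[symmetric]
      by (simp add: b0_def)
  qed
  have cells: "dallal_cells g (u / (1 + g)) = (c0, c1, c2)"
    using nz by (simp add: dallal_cells_def c0_def c1_def c2_def s_def m_def k_def)
  have "a1\<^sup>2 * c1 + a2\<^sup>2 * c2 = 2 * u / (g * m * s\<^sup>2)"
    using nz unfolding a1_def a2_def c1_def c2_def
    by (simp add: field_simps power2_eq_square) (simp add: s_def m_def algebra_simps)
  moreover have "a1 * b1 * c1 + a2 * b1 * c2 = 0"
    using nz unfolding a1_def a2_def b1_def c1_def c2_def by (simp add: field_simps)
  moreover have "b0\<^sup>2 * c0 + b1\<^sup>2 * (c1 + c2) = 1 / (u * k)"
    using nz unfolding b0_def b1_def c0_def c1_def c2_def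
    by (simp add: field_simps power2_eq_square) (simp add: s_def m_def k_def algebra_simps)
  moreover have "trial_moment2 (f * b0, e * a1 + f * b1, e * a2 + f * b1) (f' * b0, e' * a1 + f' * b1, e' * a2 + f' * b1) (c0, c1, c2)
      = e * e' * (a1\<^sup>2 * c1 + a2\<^sup>2 * c2) + (e * f' + f * e') * (a1 * b1 * c1 + a2 * b1 * c2)
        + f * f' * (b0\<^sup>2 * c0 + b1\<^sup>2 * (c1 + c2))"
    by (simp add: trial_moment2_def power2_eq_square algebra_simps)
  ultimately show ?thesis
    by (simp add: coeffs cells s_def m_def k_def)
qed

lemma dallal_outcomes_eq: "dallal_outcomes n0 n1 = trinom_outcomes n0 \<times> trinom_outcomes n1"
  by (auto simp: dallal_outcomes_def trinom_outcomes_def)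

lemma dallal_cells_sum: "dallal_cells g l = (p0, p1, p2) \<Longrightarrow> p0 + p1 + p2 = 1"
  by (auto simp: dallal_cells_def algebra_simps)

lemma dallal_fisher_info:
  fixes g u v :: real and j k :: 3
  assumes g: "0 < g" "g < 1" and u: "0 < u" "u < 1" and v: "0 < v" "v < 1"
  shows "fisher_info (dallal_outcomes n0 n1) (dallal_pmf_guv n0 n1) (vector [g, u, v]) $ j $ k
     = axis j 1 $ 1 * axis k 1 $ 1 * (2 * (real n0 * u + real n1 * v) / (g * (1 - g) * (1 + g)\<^sup>2))
       + real n0 * (axis j 1 $ 2 * axis k 1 $ 2) / (u * (1 - u))
       + real n1 * (axis j 1 $ 3 * axis k 1 $ 3) / (v * (1 - v))"
proof -
  obtain p0 p1 p2 q0 q1 q2 where p: "dallal_cells g (u / (1 + g)) = (p0, p1, p2)"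
    and q: "dallal_cells g (v / (1 + g)) = (q0, q1, q2)"
    by (cases "dallal_cells g (u / (1 + g))", cases "dallal_cells g (v / (1 + g))") blast
  have "fisher_info (dallal_outcomes n0 n1) (dallal_pmf_guv n0 n1) (vector [g, u, v]) $ j $ k
      = (\<Sum>x\<in>trinom_outcomes n0 \<times> trinom_outcomes n1.
          trinom_pmf n0 (p0, p1, p2) (fst x) * trinom_pmf n1 (q0, q1, q2) (snd x)
          * (count_comb (dallal_score_coeffs g u (axis j 1 $ 1) (axis j 1 $ 2)) (fst x)
             + count_comb (dallal_score_coeffs g v (axis j 1 $ 1) (axis j 1 $ 3)) (snd x))
          * (count_comb (dallal_score_coeffs g u (axis k 1 $ 1) (axis k 1 $ 2)) (fst x)
             + count_comb (dallal_score_coeffs g v (axis k 1 $ 1) (axis k 1 $ 3)) (snd x)))"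
    unfolding fisher_info_def dallal_outcomes_eq
    by (simp add: score_dallal_pmf_guv[OF g u v] dallal_pmf_guv_def dallal_pmf_def p q)
  also have "\<dots> = real n0 * trial_moment2 (dallal_score_coeffs g u (axis j 1 $ 1) (axis j 1 $ 2))
        (dallal_score_coeffs g u (axis k 1 $ 1) (axis k 1 $ 2)) (p0, p1, p2)
      + real n1 * trial_moment2 (dallal_score_coeffs g v (axis j 1 $ 1) (axis j 1 $ 3))
        (dallal_score_coeffs g v (axis k 1 $ 1) (axis k 1 $ 3)) (q0, q1, q2)"
    using dallal_score_coeffs_mean[OF g u] dallal_score_coeffs_mean[OF g v]
    by (intro two_trinom_centered_moment2 dallal_cells_sum[OF p] dallal_cells_sum[OF q]) (simp_all add: p q)
  also have "\<dots> = axis j 1 $ 1 * axis k 1 $ 1 * (2 * (real n0 * u + real n1 * v) / (g * (1 - g) * (1 + g)\<^sup>2))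
       + real n0 * (axis j 1 $ 2 * axis k 1 $ 2) / (u * (1 - u))
       + real n1 * (axis j 1 $ 3 * axis k 1 $ 3) / (v * (1 - v))"
    unfolding p[symmetric] q[symmetric] dallal_score_coeffs_moment2[OF g u] dallal_score_coeffs_moment2[OF g v]
    by (simp add: add_divide_distrib distrib_left ac_simps)
  finally show ?thesis .
qed

lemma det_dallal_fisher_info:
  fixes g u v :: real
  assumes "0 < g" "g < 1" "0 < u" "u < 1" "0 < v" "v < 1"
  shows "det (fisher_info (dallal_outcomes n0 n1) (dallal_pmf_guv n0 n1) (vector [g, u, v]))
     = 2 * (real n0 * u + real n1 * v) / (g * (1 - g) * (1 + g)\<^sup>2)
       * (real n0 / (u * (1 - u))) * (real n1 / (v * (1 - v)))"
proof -
  let ?F = "fisher_info (dallal_outcomes n0 n1) (dallal_pmf_guv n0 n1) (vector [g, u, v])"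
  have "?F $ 1 $ 2 = 0" "?F $ 1 $ 3 = 0" "?F $ 2 $ 1 = 0" "?F $ 2 $ 3 = 0" "?F $ 3 $ 1 = 0" "?F $ 3 $ 2 = 0"
    by (simp_all add: dallal_fisher_info[OF assms] axis_def)
  moreover have "?F $ 1 $ 1 = 2 * (real n0 * u + real n1 * v) / (g * (1 - g) * (1 + g)\<^sup>2)"
    "?F $ 2 $ 2 = real n0 / (u * (1 - u))" "?F $ 3 $ 3 = real n1 / (v * (1 - v))"
    by (simp_all add: dallal_fisher_info[OF assms] axis_def)
  ultimately show ?thesis
    unfolding det_3 by simp
qed

section \<open>Jeffreys' prior\<close>

lemma dallal_jeffreys_eq:
  assumes "n0 \<ge> 1" "0 < g" "g < 1" "0 < u" "u < 1" "0 < v" "v < 1"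
  shows "dallal_jeffreys n0 n1 (g, u, v)
       = sqrt (2 * real n0 ^ 2 * real n1) * (gamma_kernel g * uv_kernel (real n1 / real n0) (u, v))"
proof -
  let ?r = "real n1 / real n0"
  define s m k l where "s = 1 + g" and "m = 1 - g" and "k = 1 - u" and "l = 1 - v"
  have pos: "0 < s" "0 < m" "0 < k" "0 < l" "0 < real n0" using assms by (auto simp: s_def m_def k_def l_def)
  have "dallal_jeffreys n0 n1 (g, u, v)
      = sqrt (2 * (real n0 * u + real n1 * v) / (g * m * s\<^sup>2) * (real n0 / (u * k)) * (real n1 / (v * l)))"
    unfolding dallal_jeffreys_def jeffreys_unnorm_def prod.case det_dallal_fisher_info[OF assms(2-7)]
    by (simp add: s_def m_def k_def l_def)
  also have "\<dots> = sqrt (2 * real n0 ^ 2 * real n1 * ((u + ?r * v) / (g * m * s\<^sup>2 * (u * k) * (v * l))))"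
    using pos assms by (simp add: field_simps power2_eq_square)
  also have "\<dots> = sqrt (2 * real n0 ^ 2 * real n1)
       * (sqrt (u + ?r * v) / (sqrt g * sqrt m * s * (sqrt u * sqrt k) * (sqrt v * sqrt l)))"
    using pos by (simp add: real_sqrt_mult real_sqrt_divide)
  also have "\<dots> = sqrt (2 * real n0 ^ 2 * real n1) * (gamma_kernel g * uv_kernel ?r (u, v))"
    using assms by (simp add: gamma_kernel_def uv_kernel_def arcsine_kernel_eq s_def m_def k_def l_def)
  finally show ?thesis .
qed

lemma bij_betw_dallal_reparam:
  "bij_betw dallal_reparam dallal_Omega ({0<..<1} \<times> {0<..<1} \<times> {0<..<1})"
proof (rule bij_betwI')
  fix x y assume "x \<in> dallal_Omega" "y \<in> dallal_Omega"
  then show "(dallal_reparam x = dallal_reparam y) = (x = y)"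
    by (cases x; cases y) (auto simp: dallal_reparam_def dallal_Omega_def)
next
  fix x assume "x \<in> dallal_Omega"
  then obtain g a b where x: "x = (g, a, b)" "0 < g" "g < 1" "0 < a" "a < 1 / (1 + g)" "0 < b" "b < 1 / (1 + g)"
    by (auto simp: dallal_Omega_def)
  then have "(1 + g) * a < 1" "(1 + g) * b < 1" by (auto simp: field_simps)
  then show "dallal_reparam x \<in> {0<..<1} \<times> {0<..<1} \<times> {0<..<1}"
    using x by (auto simp: dallal_reparam_def)
next
  fix y :: "real \<times> real \<times> real" assume "y \<in> {0<..<1} \<times> {0<..<1} \<times> {0<..<1}"
  then obtain g u v where y: "y = (g, u, v)" "0 < g" "g < 1" "0 < u" "u < 1" "0 < v" "v < 1" by auto
  then have "(g, u / (1 + g), v / (1 + g)) \<in> dallal_Omega"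
    by (auto simp: dallal_Omega_def divide_strict_right_mono)
  moreover have "y = dallal_reparam (g, u / (1 + g), v / (1 + g))" using y by (auto simp: dallal_reparam_def)
  ultimately show "\<exists>x\<in>dallal_Omega. y = dallal_reparam x" by blast
qed

theorem proposition1:
  fixes n0 n1 :: nat
  assumes "n0 \<ge> 1" and "n1 \<ge> 1"
  defines "r \<equiv> real n1 / real n0"
      and "J \<equiv> dallal_jeffreys n0 n1"
      and "C \<equiv> {0<..<(1::real)} \<times> {0<..<(1::real)} \<times> {0<..<(1::real)}"
      and "g \<equiv> (\<lambda>\<gamma>::real. sqrt 2 / pi * (\<gamma> powr (-1/2) * (1 - \<gamma>) powr (-1/2) / (1 + \<gamma>)))"
  shows "bij_betw dallal_reparam dallal_Omega C
    \<and> (\<exists>c>0. \<forall>\<gamma> u v. 0 < \<gamma> \<and> \<gamma> < 1 \<and> 0 < u \<and> u < 1 \<and> 0 < v \<and> v < 1 \<longrightarrow>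
          J (\<gamma>, u, v) = c * ((\<gamma> powr (-1/2) * (1 - \<gamma>) powr (-1/2) / (1 + \<gamma>))
             * sqrt (u + r * v) * u powr (-1/2) * (1 - u) powr (-1/2)
             * v powr (-1/2) * (1 - v) powr (-1/2)))
    \<and> J integrable_on C \<and> integral C J > 0
    \<and> (let Z = integral C J in
         (\<forall>\<gamma>. 0 < \<gamma> \<and> \<gamma> < 1 \<longrightarrow>
            integral ({0<..<1} \<times> {0<..<1}) (\<lambda>(u, v). J (\<gamma>, u, v) / Z) = g \<gamma>)
       \<and> (\<forall>\<gamma> u v. 0 < \<gamma> \<and> \<gamma> < 1 \<and> 0 < u \<and> u < 1 \<and> 0 < v \<and> v < 1 \<longrightarrow>
            J (\<gamma>, u, v) / Z = g \<gamma> * integral {0<..<1} (\<lambda>\<gamma>'. J (\<gamma>', u, v) / Z)))"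
proof -
  let ?I = "{0<..<1::real}"
  define c where "c = sqrt (2 * real n0 ^ 2 * real n1)"
  define K where "K = integral (?I \<times> ?I) (uv_kernel r)"
  have r: "0 \<le> r" and c: "0 < c" using assms(1,2) by (simp_all add: r_def c_def)
  have K: "(uv_kernel r has_integral K) (?I \<times> ?I)" "1 \<le> K"
    using uv_kernel_integrable[OF r] uv_kernel_integral_ge_1[OF r] by (auto simp: K_def)
  have J: "J (x, y) = gamma_kernel x * (c * uv_kernel r y)" if "x \<in> ?I" "y \<in> ?I \<times> ?I" for x y
    using that dallal_jeffreys_eq[OF assms(1)] by (auto simp: J_def c_def r_def)
  have cont: "continuous_on (?I \<times> ?I) (\<lambda>y. c * uv_kernel r y)"
    using continuous_on_uv_kernel[OF r] by (intro continuous_intros)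
  have k0: "0 \<le> c * uv_kernel r y" if "y \<in> ?I \<times> ?I" for y
    using that uv_kernel_bounds(1)[OF r] c by force
  have nz: "pi / sqrt 2 \<noteq> 0" "c * K \<noteq> 0" using c K by auto
  note marginals = product_density_marginals[OF open_greaterThanLessThan open_unit_square
      continuous_on_gamma_kernel cont gamma_kernel_nonneg k0 gamma_kernel_has_integral has_integral_mult_right[OF K(1)] nz J]
  have g: "g x = gamma_kernel x / (pi / sqrt 2)" for x
    by (simp add: g_def gamma_kernel_def arcsine_kernel_def ac_simps)
  have "J (\<gamma>, u, v) = c * ((\<gamma> powr (-1/2) * (1 - \<gamma>) powr (-1/2) / (1 + \<gamma>))
      * sqrt (u + r * v) * u powr (-1/2) * (1 - u) powr (-1/2) * v powr (-1/2) * (1 - v) powr (-1/2))"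
    if "0 < \<gamma>" "\<gamma> < 1" "0 < u" "u < 1" "0 < v" "v < 1" for \<gamma> u v
    using that by (simp add: J gamma_kernel_def uv_kernel_def arcsine_kernel_def ac_simps)
  then show ?thesis
    using bij_betw_dallal_reparam marginals c K
    by (auto simp: C_def g Let_def integral_unique case_prod_unfold)
qed

end
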